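(* Let $K$ and $L$ be $n$-element finite sets, $M=K\times L$, and let $u=(u_{kl})$ be a unitary matrix indexed by $K\times L$ all of whose entries are nonzero. Let $G$ be a symmetry group of $u$ and $R$ the associated representation of $G$ on $F(M)$ (as defined in the context). Then the Berezin transform $I_u$ commutes with $R$: $I_uR_g=R_gI_u$ for all $g\in G$.
   Context: For a finite set $J$, $F(J)$ denotes the space of complex-valued functions on $J$, with standard Hermitian product. For $f=(f_{kl})\in F(M)$, $C_uf$ and $D_uf$ are the operators on $F(K)$ with matrices $x_{kk'}=\sum_{l\in L}u_{kl}f_{kl}\bar u_{k'l}$ and $y_{kk'}=\sum_{l\in L}u_{kl}f_{k'l}\bar u_{k'l}$ respectively; these maps are linear bijections $F(M)\to\operatorname{End}F(K)$, and the Berezin transform is $I_u=C_u^{-1}D_u$, explicitly $(I_uf)_{kl}=\sum_{k',l'}\frac{u_{kl'}u_{k'l}}{u_{kl}u_{k'l'}}f_{k'l'}|u_{k'l'}|^2$. Let $\mathcal U:F(L)\to F(K)$ be $(\mathcal U\psi)_k=\sum_{l}u_{kl}\psi_l$. A group $G$ is called a symmetry group of $u$ if $G$ acts on the left on the sets $K$ and $L$, and there are faithful unitary representations $S$ on $F(K)$ and $T$ on $F(L)$ of the form $(S_g\varphi)_k=a_k(g)\varphi_{g^{-1}k}$, $(T_g\psi)_l=b_l(g)\psi_{g^{-1}l}$, where $|a_k(g)|=|b_l(g)|=1$, such that $S_g\mathcal U=\mathcal U T_g$ for all $g\in G$. The representation $R$ of $G$ on $F(M)$ is $(R_gf)_{kl}=f_{g^{-1}k\,g^{-1}l}$.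 *)

theory Defs
  imports "HOL-Analysis.Analysis" "HOL-Algebra.Group_Action"
begin

text \<open>Functions on a finite set J are modelled as total functions whose values
outside J are irrelevant. Elements of F(M), M = K x L, are curried functions f k l.\<close>

definition unitary_mat :: "'k set \<Rightarrow> 'l set \<Rightarrow> ('k \<Rightarrow> 'l \<Rightarrow> complex) \<Rightarrow> bool" where
  "unitary_mat K L u \<longleftrightarrow>
     (\<forall>k\<in>K. \<forall>k'\<in>K. (\<Sum>l\<in>L. u k l * cnj (u k' l)) = (if k = k' then 1 else 0)) \<and>
     (\<forall>l\<in>L. \<forall>l'\<in>L. (\<Sum>k\<in>K. cnj (u k l) * u k l') = (if l = l' then 1 else 0))"

definition Uop :: "'l set \<Rightarrow> ('k \<Rightarrow> 'l \<Rightarrow> complex) \<Rightarrow> ('l \<Rightarrow> complex) \<Rightarrow> 'k \<Rightarrow> complex" where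
  "Uop L u \<psi> k = (\<Sum>l\<in>L. u k l * \<psi> l)"

definition berezin :: "'k set \<Rightarrow> 'l set \<Rightarrow> ('k \<Rightarrow> 'l \<Rightarrow> complex) \<Rightarrow> ('k \<Rightarrow> 'l \<Rightarrow> complex) \<Rightarrow> 'k \<Rightarrow> 'l \<Rightarrow> complex" where
  "berezin K L u f k l =
     (\<Sum>k'\<in>K. \<Sum>l'\<in>L. (u k l' * u k' l) / (u k l * u k' l') * f k' l' * (of_real (cmod (u k' l')))\<^sup>2)"

definition monop :: "('g, 'b) monoid_scheme \<Rightarrow> ('g \<Rightarrow> 'x \<Rightarrow> 'x) \<Rightarrow> ('x \<Rightarrow> 'g \<Rightarrow> complex) \<Rightarrow> 'g \<Rightarrow> ('x \<Rightarrow> complex) \<Rightarrow> 'x \<Rightarrow> complex" where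
  "monop G act a g \<phi> x = a x g * \<phi> (act (inv\<^bsub>G\<^esub> g) x)"

definition monomial_rep :: "('g, 'b) monoid_scheme \<Rightarrow> 'x set \<Rightarrow> ('g \<Rightarrow> 'x \<Rightarrow> 'x) \<Rightarrow> ('x \<Rightarrow> 'g \<Rightarrow> complex) \<Rightarrow> bool" where
  "monomial_rep G X act a \<longleftrightarrow>
     (\<forall>g\<in>carrier G. \<forall>x\<in>X. cmod (a x g) = 1) \<and>
     (\<forall>g\<in>carrier G. \<forall>h\<in>carrier G. \<forall>\<phi>. \<forall>x\<in>X.
        monop G act a (g \<otimes>\<^bsub>G\<^esub> h) \<phi> x = monop G act a g (monop G act a h \<phi>) x) \<and>
     (\<forall>x\<in>X. \<forall>\<phi>. monop G act a \<one>\<^bsub>G\<^esub> \<phi> x = \<phi> x) \<and>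
     (\<forall>g\<in>carrier G. (\<forall>\<phi>. \<forall>x\<in>X. monop G act a g \<phi> x = \<phi> x) \<longrightarrow> g = \<one>\<^bsub>G\<^esub>)"

definition symmetry_group :: "('g, 'b) monoid_scheme \<Rightarrow> 'k set \<Rightarrow> 'l set \<Rightarrow> ('k \<Rightarrow> 'l \<Rightarrow> complex)
   \<Rightarrow> ('g \<Rightarrow> 'k \<Rightarrow> 'k) \<Rightarrow> ('g \<Rightarrow> 'l \<Rightarrow> 'l) \<Rightarrow> ('k \<Rightarrow> 'g \<Rightarrow> complex) \<Rightarrow> ('l \<Rightarrow> 'g \<Rightarrow> complex) \<Rightarrow> bool" where
  "symmetry_group G K L u actK actL a b \<longleftrightarrow>
     group G \<and> group_action G K actK \<and> group_action G L actL \<and>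
     monomial_rep G K actK a \<and> monomial_rep G L actL b \<and>
     (\<forall>g\<in>carrier G. \<forall>\<psi>. \<forall>k\<in>K.
        monop G actK a g (Uop L u \<psi>) k = Uop L u (monop G actL b g \<psi>) k)"

definition Rop :: "('g, 'b) monoid_scheme \<Rightarrow> ('g \<Rightarrow> 'k \<Rightarrow> 'k) \<Rightarrow> ('g \<Rightarrow> 'l \<Rightarrow> 'l) \<Rightarrow> 'g
   \<Rightarrow> ('k \<Rightarrow> 'l \<Rightarrow> complex) \<Rightarrow> 'k \<Rightarrow> 'l \<Rightarrow> complex" where
  "Rop G actK actL g f k l = f (actK (inv\<^bsub>G\<^esub> g) k) (actL (inv\<^bsub>G\<^esub> g) l)"

end

theory Submission
  imports Defs
begin

text \<open>Since S_g and T_g are monomial, the intertwining relation S_g U = U T_g, tested on delta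
  functions, says that u and its transform (k, l) \<mapsto> u_{g^-1 k, g^-1 l} differ by phases:
  u_kl = \<alpha>_k v_kl \<beta>_l with |\<alpha>_k| = |\<beta>_l| = 1. The kernel of the Berezin transform is invariant
  under such a gauge, as the phases cancel in the cross ratio u_kl' u_k'l / (u_kl u_k'l') and do
  not affect |u_k'l'|. Reindexing the double sum along the permutations g^-1 of K and L then
  gives I_u R_g = R_g I_u.\<close>

definition berezin_kernel :: "('k \<Rightarrow> 'l \<Rightarrow> complex) \<Rightarrow> 'k \<Rightarrow> 'l \<Rightarrow> 'k \<Rightarrow> 'l \<Rightarrow> complex" where
  "berezin_kernel u k l k' l' =
     (u k l' * u k' l) / (u k l * u k' l') * (of_real (cmod (u k' l')))\<^sup>2"

lemma berezin_eq_kernel_sum: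
  "berezin K L u f k l = (\<Sum>k'\<in>K. \<Sum>l'\<in>L. berezin_kernel u k l k' l' * f k' l')"
  unfolding berezin_def berezin_kernel_def by (simp add: algebra_simps)

lemma berezin_kernel_phase_gauge:
  assumes gauge: "\<And>x y. x \<in> X \<Longrightarrow> y \<in> Y \<Longrightarrow> u x y = \<alpha> x * v x y * \<beta> y"
    and \<alpha>: "\<And>x. x \<in> X \<Longrightarrow> cmod (\<alpha> x) = 1"
    and \<beta>: "\<And>y. y \<in> Y \<Longrightarrow> cmod (\<beta> y) = 1"
    and "k \<in> X" "k' \<in> X" "l \<in> Y" "l' \<in> Y"
  shows "berezin_kernel u k l k' l' = berezin_kernel v k l k' l'"
proof -
  have nz: "\<alpha> k * \<alpha> k' * \<beta> l * \<beta> l' \<noteq> 0"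
    using \<alpha> \<beta> assms(4-7) by (metis mult_eq_0_iff norm_zero zero_neq_one)
  have "(u k l' * u k' l) / (u k l * u k' l')
      = ((v k l' * v k' l) * (\<alpha> k * \<alpha> k' * \<beta> l * \<beta> l'))
        / ((v k l * v k' l') * (\<alpha> k * \<alpha> k' * \<beta> l * \<beta> l'))"
    using assms(4-7) by (simp add: gauge algebra_simps)
  also have "\<dots> = (v k l' * v k' l) / (v k l * v k' l')"
    using nz by (rule mult_divide_mult_cancel_right)
  finally have ratio: "(u k l' * u k' l) / (u k l * u k' l') = (v k l' * v k' l) / (v k l * v k' l')" .
  have "cmod (u k' l') = cmod (v k' l')"
    using assms(5,7) by (simp add: gauge norm_mult \<alpha> \<beta>)
  then show ?thesis
    unfolding berezin_kernel_def ratio by simp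
qed

lemma berezin_equivariant_bij:
  assumes \<sigma>: "bij_betw \<sigma> K K" and \<tau>: "bij_betw \<tau> L L"
    and kernel: "\<And>x y x' y'. x \<in> K \<Longrightarrow> y \<in> L \<Longrightarrow> x' \<in> K \<Longrightarrow> y' \<in> L \<Longrightarrow>
      berezin_kernel u (\<sigma> x) (\<tau> y) (\<sigma> x') (\<tau> y') = berezin_kernel u x y x' y'"
    and "k \<in> K" "l \<in> L"
  shows "berezin K L u (\<lambda>x y. f (\<sigma> x) (\<tau> y)) k l = berezin K L u f (\<sigma> k) (\<tau> l)"
proof -
  have "berezin K L u (\<lambda>x y. f (\<sigma> x) (\<tau> y)) k l
      = (\<Sum>x\<in>K. \<Sum>y\<in>L. berezin_kernel u (\<sigma> k) (\<tau> l) (\<sigma> x) (\<tau> y) * f (\<sigma> x) (\<tau> y))"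
    unfolding berezin_eq_kernel_sum using assms(4,5) by (simp add: kernel)
  also have "\<dots> = (\<Sum>x\<in>K. \<Sum>y\<in>L. berezin_kernel u (\<sigma> k) (\<tau> l) (\<sigma> x) y * f (\<sigma> x) y)"
    by (intro sum.cong refl sum.reindex_bij_betw[OF \<tau>])
  also have "\<dots> = berezin K L u f (\<sigma> k) (\<tau> l)"
    unfolding berezin_eq_kernel_sum by (rule sum.reindex_bij_betw[OF \<sigma>])
  finally show ?thesis .
qed

lemma monop_intertwiner_entries:
  assumes "finite L" and bij: "bij_betw (actL (inv\<^bsub>G\<^esub> g)) L L"
    and intertwine: "\<And>\<psi>. monop G actK a g (Uop L u \<psi>) k = Uop L u (monop G actL b g \<psi>) k"
    and "l \<in> L"
  shows "u k l * b l g = a k g * u (actK (inv\<^bsub>G\<^esub> g) k) (actL (inv\<^bsub>G\<^esub> g) l)"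
proof -
  let ?h = "inv\<^bsub>G\<^esub> g"
  define \<delta> where "\<delta> = (\<lambda>l'. if l' = actL ?h l then 1 else 0 :: complex)"
  have "Uop L u (monop G actL b g \<delta>) k = (\<Sum>l'\<in>L. if l' = l then u k l * b l g else 0)"
    unfolding Uop_def monop_def \<delta>_def
    by (rule sum.cong) (use bij_betw_imp_inj_on[OF bij] \<open>l \<in> L\<close> in \<open>auto simp: inj_on_eq_iff\<close>)
  also have "\<dots> = u k l * b l g"
    using \<open>finite L\<close> \<open>l \<in> L\<close> by simp
  finally have "Uop L u (monop G actL b g \<delta>) k = u k l * b l g" .
  moreover have "monop G actK a g (Uop L u \<delta>) k = a k g * u (actK ?h k) (actL ?h l)"
    unfolding Uop_def monop_def \<delta>_def
    using \<open>finite L\<close> bij_betwE[OF bij] \<open>l \<in> L\<close> by (simp add: if_distrib cong: if_cong)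
  ultimately show ?thesis
    using intertwine by simp
qed

lemma group_action_inv_bij:
  assumes "group_action G E \<phi>" and "g \<in> carrier G"
  shows "bij_betw (\<phi> (inv\<^bsub>G\<^esub> g)) E E"
proof -
  have "group G"
    using assms(1) unfolding group_action_def group_hom_def by simp
  then have "inv\<^bsub>G\<^esub> g \<in> carrier G"
    using assms(2) by (simp add: group.inv_closed)
  then show ?thesis
    using group_action.bij_prop0[OF assms(1)] by (simp add: Bij_def)
qed

lemma symmetry_group_phase_gauge:
  assumes "finite L" and sym: "symmetry_group G K L u actK actL a b"
    and "g \<in> carrier G" "k \<in> K" "l \<in> L"
  shows "u k l = a k g * u (actK (inv\<^bsub>G\<^esub> g) k) (actL (inv\<^bsub>G\<^esub> g) l) * inverse (b l g)"
proof -
  have bij: "bij_betw (actL (inv\<^bsub>G\<^esub> g)) L L"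
    using sym \<open>g \<in> carrier G\<close> unfolding symmetry_group_def by (blast intro: group_action_inv_bij)
  have intertwine: "\<And>\<psi>. monop G actK a g (Uop L u \<psi>) k = Uop L u (monop G actL b g \<psi>) k"
    using sym assms(3,4) unfolding symmetry_group_def by blast
  have "cmod (b l g) = 1"
    using sym assms(3,5) unfolding symmetry_group_def monomial_rep_def by blast
  then have "b l g \<noteq> 0"
    by auto
  then show ?thesis
    using monop_intertwiner_entries[OF \<open>finite L\<close> bij intertwine \<open>l \<in> L\<close>] by (simp add: field_simps)
qed

theorem corollary3p3:
  fixes G :: "('g, 'b) monoid_scheme"
    and K :: "'k set" and L :: "'l set" and n :: nat
    and u :: "'k \<Rightarrow> 'l \<Rightarrow> complex"
    and actK :: "'g \<Rightarrow> 'k \<Rightarrow> 'k" and actL :: "'g \<Rightarrow> 'l \<Rightarrow> 'l"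
    and a :: "'k \<Rightarrow> 'g \<Rightarrow> complex" and b :: "'l \<Rightarrow> 'g \<Rightarrow> complex"
  assumes "finite K" and "finite L" and "card K = n" and "card L = n"
    and "unitary_mat K L u"
    and "\<forall>k\<in>K. \<forall>l\<in>L. u k l \<noteq> 0"
    and "symmetry_group G K L u actK actL a b"
  shows "\<forall>g\<in>carrier G. \<forall>f. \<forall>k\<in>K. \<forall>l\<in>L.
           berezin K L u (Rop G actK actL g f) k l = Rop G actK actL g (berezin K L u f) k l"
proof (intro ballI allI)
  fix g f k l assume g: "g \<in> carrier G" and "k \<in> K" "l \<in> L"
  let ?h = "inv\<^bsub>G\<^esub> g"
  have sym: "group_action G K actK" "group_action G L actL"
    "\<And>x. x \<in> K \<Longrightarrow> cmod (a x g) = 1" "\<And>y. y \<in> L \<Longrightarrow> cmod (b y g) = 1"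
    using assms(7) g unfolding symmetry_group_def monomial_rep_def by auto
  have "berezin K L u (\<lambda>x y. f (actK ?h x) (actL ?h y)) k l = berezin K L u f (actK ?h k) (actL ?h l)"
  proof (rule berezin_equivariant_bij)
    fix x y x' y' assume "x \<in> K" "y \<in> L" "x' \<in> K" "y' \<in> L"
    then have "berezin_kernel u x y x' y'
        = berezin_kernel (\<lambda>x y. u (actK ?h x) (actL ?h y)) x y x' y'"
      by (intro berezin_kernel_phase_gauge[where \<alpha>="\<lambda>x. a x g" and \<beta>="\<lambda>y. inverse (b y g)"])
        (auto simp: symmetry_group_phase_gauge[OF \<open>finite L\<close> assms(7) g] sym(3,4) norm_inverse)
    then show "berezin_kernel u (actK ?h x) (actL ?h y) (actK ?h x') (actL ?h y') = berezin_kernel u x y x' y'"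
      by (simp add: berezin_kernel_def)
  qed (use group_action_inv_bij[OF _ g] sym(1,2) \<open>k \<in> K\<close> \<open>l \<in> L\<close> in auto)
  then show "berezin K L u (Rop G actK actL g f) k l = Rop G actK actL g (berezin K L u f) k l"
    unfolding Rop_def .
qed

end
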